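(* Let $R$ be a $*$-ring with unity. Define a relation $\leq$ on $R$ by: $a\leq b$ if and only if there exists $x\in R$ such that $a=xa=xb=ax^*=bx^*$. Then $\leq$ is a partial order on $R$.
   Context: A $*$-ring is an associative ring with an involution $*$, i.e. a map satisfying $(a+b)^*=a^*+b^*$, $(ab)^*=b^*a^*$, $(a^* )^*=a$ for all $a,b$. *)

theory Defs
  imports Main
begin

definition is_involution :: "('a::ring_1 \<Rightarrow> 'a) \<Rightarrow> bool" where
  "is_involution s \<longleftrightarrow>
     (\<forall>a b. s (a + b) = s a + s b) \<and>
     (\<forall>a b. s (a * b) = s b * s a) \<and>
     (\<forall>a. s (s a) = a)"

definition star_le :: "('a::ring_1 \<Rightarrow> 'a) \<Rightarrow> 'a \<Rightarrow> 'a \<Rightarrow> bool" where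
  "star_le s a b \<longleftrightarrow>
     (\<exists>x. a = x * a \<and> a = x * b \<and> a = a * s x \<and> a = b * s x)"

end

theory Submission
  imports Defs
begin

text \<open>Only anti-multiplicativity and \<open>s (s a) = a\<close> of the involution are used. Reflexivity is witnessed by \<open>1\<close>, and if \<open>x\<close> witnesses \<open>a \<le> b\<close> and \<open>y\<close> witnesses
\<open>b \<le> c\<close>, then \<open>x * y\<close> witnesses \<open>a \<le> c\<close>. The key point for both transitivity and
antisymmetry is that \<open>y\<close> also acts trivially on \<open>a\<close> from both sides:
\<open>a * s y = x * b * s y = x * b = a\<close>, and symmetrically \<open>y * a = a\<close>.\<close>

lemma involution_mult: "is_involution s \<Longrightarrow> s (a * b) = s b * s a"
  unfolding is_involution_def by blast

lemma involution_involutive: "is_involution s \<Longrightarrow> s (s a) = a"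
  unfolding is_involution_def by blast

lemma involution_one:
  assumes "is_involution s"
  shows "s 1 = 1"
proof -
  have "s 1 = s 1 * s (s 1)"
    using involution_involutive[OF assms] by simp
  also have "\<dots> = s (s 1 * 1)"
    using involution_mult[OF assms] by metis
  also have "\<dots> = 1"
    using involution_involutive[OF assms] by simp
  finally show ?thesis .
qed

lemma star_le_refl: "is_involution s \<Longrightarrow> star_le s a a"
  unfolding star_le_def by (rule exI[of _ 1]) (simp add: involution_one)

lemma star_le_absorb:
  fixes a b x y :: "'a::ring_1"
  assumes "a = x * b" "a = b * s x" "b = y * b" "b = b * s y"
  shows "y * a = a" and "a * s y = a"
proof -
  have "y * a = (y * b) * s x" by (simp add: assms(2) mult.assoc)
  also have "\<dots> = a" by (simp only: assms(2,3)[symmetric])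
  finally show "y * a = a" .
  have "a * s y = x * (b * s y)" by (simp add: assms(1) mult.assoc)
  also have "\<dots> = a" by (simp only: assms(1,4)[symmetric])
  finally show "a * s y = a" .
qed

lemma star_le_antisym:
  assumes "star_le s a b" "star_le s b a"
  shows "a = b"
proof -
  obtain x where x: "a = x * b" "a = b * s x"
    using assms(1) unfolding star_le_def by blast
  obtain y where y: "b = y * b" "b = b * s y" "b = a * s y"
    using assms(2) unfolding star_le_def by blast
  have "a * s y = a"
    using star_le_absorb(2)[OF x y(1,2)] .
  with y(3) show ?thesis by simp
qed

lemma star_le_trans:
  assumes s: "is_involution s" and "star_le s a b" "star_le s b c"
  shows "star_le s a c"
proof -
  obtain x where x: "a = x * a" "a = x * b" "a = a * s x" "a = b * s x"
    using assms(2) unfolding star_le_def by blast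
  obtain y where y: "b = y * b" "b = y * c" "b = b * s y" "b = c * s y"
    using assms(3) unfolding star_le_def by blast
  note absorb = star_le_absorb[OF x(2,4) y(1,3)]
  have "a = x * y * a" "a = x * y * c"
    using absorb(1) x(1,2) y(2) by (simp_all add: mult.assoc)
  moreover have "a = a * s (x * y)" "a = c * s (x * y)"
    using absorb(2) x(3,4) y(4)
    by (simp_all add: involution_mult[OF s] mult.assoc[symmetric])
  ultimately show ?thesis
    unfolding star_le_def by blast
qed

theorem mainTheorem1:
  fixes s :: "'a::ring_1 \<Rightarrow> 'a"
  assumes "is_involution s"
  shows "partial_order_on UNIV {(a, b). star_le s a b}"
  unfolding partial_order_on_def preorder_on_def refl_on_def trans_def antisym_def
  using star_le_refl[OF assms] star_le_antisym star_le_trans[OF assms] by auto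

end
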